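(* There exist a sub-Finsler free-Carnot group $\mathbb G=\mathbb R^n\times\bigwedge^2(\mathbb R^n)$ of step 2, equipped with an adequate scalar product (induced distance $d_{\mathrm{eu}}$, unit sphere $\mathbb S_{\mathrm{eu}}$ centered at $0_{\mathbb G}$), and numbers $C,\delta_0>0$ such that for every $0<\delta\le\delta_0$ there exists $g_\delta\in\mathbb S_{\mathrm{eu}}\setminus A_\delta$ with the property that for every $\varepsilon>0$ there exists $h_{\varepsilon,\delta}\in\mathbb S_{\mathrm{eu}}$ with $0<d_{\mathrm{eu}}(g_\delta,h_{\varepsilon,\delta})\le\varepsilon$ and $$d_{\mathrm{cc}}(0_{\mathbb G},h_{\varepsilon,\delta})\ge d_{\mathrm{cc}}(0_{\mathbb G},g_\delta)+\frac C\delta\,d_{\mathrm{eu}}(g_\delta,h_{\varepsilon,\delta}).$$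
   Context: Group law: $(x_1,Y_1)*(x_2,Y_2)=(x_1+x_2,Y_1+Y_2+\tfrac12x_1\wedge x_2)$, $v\wedge w=v\otimes w-w\otimes v$. A sub-Finsler structure is a norm on $\mathbb R^n$ extended left-invariantly; horizontal curves from $0_{\mathbb G}$: $\gamma_u(t)=\int_0^tu+\tfrac12\int_0^t(\int_0^su)\wedge u(s)\,ds$, $u\in L^1([0,1],\mathbb R^n)$, length $\int_0^1\lVert u\rVert_{\mathrm{sf}}$; $d_{\mathrm{cc}}$ = infimum of lengths of horizontal curves joining two points. Adequate scalar product: $\mathbb R^n\perp\bigwedge^2(\mathbb R^n)$ and $\langle v_1\wedge w_1,v_2\wedge w_2\rangle=\langle v_1,v_2\rangle\langle w_1,w_2\rangle-\langle v_1,w_2\rangle\langle w_1,v_2\rangle$. $A_\delta=\{p\in\mathbb S_{\mathrm{eu}}:d_{\mathrm{eu}}(p,\mathrm{Abn}(\mathbb G))\le\delta\}$ with $\mathrm{Abn}(\mathbb G)=\bigcup\{\mathcal P\times\bigwedge^2(\mathcal P):\mathcal P\text{ an }(n-2)\text{-dimensional subspace of }\mathbb R^n\}$. *)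

theory Defs
  imports "HOL-Analysis.Analysis"
begin

text \<open>Model: R^n is represented by functions nat => real supported in {..<n};
  the second layer wedge^2(R^n) by antisymmetric matrices nat => nat => real
  supported in {..<n} x {..<n}, via v wedge w = v (x) w - w (x) v.\<close>

definition vecs :: "nat \<Rightarrow> (nat \<Rightarrow> real) set" where
  "vecs n = {x. \<forall>i\<ge>n. x i = 0}"

definition bivecs :: "nat \<Rightarrow> (nat \<Rightarrow> nat \<Rightarrow> real) set" where
  "bivecs n = {Y. (\<forall>i j. Y i j = - Y j i) \<and> (\<forall>i j. n \<le> i \<or> n \<le> j \<longrightarrow> Y i j = 0)}"

definition wedge :: "(nat \<Rightarrow> real) \<Rightarrow> (nat \<Rightarrow> real) \<Rightarrow> (nat \<Rightarrow> nat \<Rightarrow> real)" where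
  "wedge v w = (\<lambda>i j. v i * w j - w i * v j)"

type_synonym gpt = "(nat \<Rightarrow> real) \<times> (nat \<Rightarrow> nat \<Rightarrow> real)"

definition Gcarrier :: "nat \<Rightarrow> gpt set" where
  "Gcarrier n = vecs n \<times> bivecs n"

definition zeroG :: gpt where
  "zeroG = ((\<lambda>_. 0), (\<lambda>_ _. 0))"

definition innerM :: "nat \<Rightarrow> (nat \<Rightarrow> nat \<Rightarrow> real) \<Rightarrow> (nat \<Rightarrow> real) \<Rightarrow> (nat \<Rightarrow> real) \<Rightarrow> real" where
  "innerM n M x y = (\<Sum>i<n. \<Sum>j<n. M i j * x i * y j)"

definition is_scalar_product :: "nat \<Rightarrow> (nat \<Rightarrow> nat \<Rightarrow> real) \<Rightarrow> bool" where
  "is_scalar_product n M \<longleftrightarrow> (\<forall>i j. M i j = M j i) \<and>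
     (\<forall>x\<in>vecs n. x \<noteq> (\<lambda>_. 0) \<longrightarrow> innerM n M x x > 0)"

text \<open>The induced scalar product on wedge^2(R^n): the bilinear extension of
  <v1 wedge w1, v2 wedge w2> = <v1,v2><w1,w2> - <v1,w2><w1,v2>
  (in the matrix model this is half the M-Frobenius product).\<close>
definition innerBiv :: "nat \<Rightarrow> (nat \<Rightarrow> nat \<Rightarrow> real) \<Rightarrow> (nat \<Rightarrow> nat \<Rightarrow> real) \<Rightarrow> (nat \<Rightarrow> nat \<Rightarrow> real) \<Rightarrow> real" where
  "innerBiv n M A B = (1/2) * (\<Sum>i<n. \<Sum>j<n. \<Sum>k<n. \<Sum>l<n. A i j * M i k * M j l * B k l)"

definition innerG :: "nat \<Rightarrow> (nat \<Rightarrow> nat \<Rightarrow> real) \<Rightarrow> gpt \<Rightarrow> gpt \<Rightarrow> real" where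
  "innerG n M p q = innerM n M (fst p) (fst q) + innerBiv n M (snd p) (snd q)"

definition d_eu :: "nat \<Rightarrow> (nat \<Rightarrow> nat \<Rightarrow> real) \<Rightarrow> gpt \<Rightarrow> gpt \<Rightarrow> real" where
  "d_eu n M p q = (let r = ((\<lambda>i. fst p i - fst q i), (\<lambda>i j. snd p i j - snd q i j))
                   in sqrt (innerG n M r r))"

definition S_eu :: "nat \<Rightarrow> (nat \<Rightarrow> nat \<Rightarrow> real) \<Rightarrow> gpt set" where
  "S_eu n M = {p \<in> Gcarrier n. d_eu n M zeroG p = 1}"

definition is_sf_norm :: "nat \<Rightarrow> ((nat \<Rightarrow> real) \<Rightarrow> real) \<Rightarrow> bool" where
  "is_sf_norm n N \<longleftrightarrow>
     (\<forall>x\<in>vecs n. 0 \<le> N x) \<and>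
     (\<forall>x\<in>vecs n. N x = 0 \<longleftrightarrow> x = (\<lambda>_. 0)) \<and>
     (\<forall>c. \<forall>x\<in>vecs n. N (\<lambda>i. c * x i) = \<bar>c\<bar> * N x) \<and>
     (\<forall>x\<in>vecs n. \<forall>y\<in>vecs n. N (\<lambda>i. x i + y i) \<le> N x + N y)"

definition control :: "nat \<Rightarrow> (real \<Rightarrow> nat \<Rightarrow> real) \<Rightarrow> bool" where
  "control n u \<longleftrightarrow> (\<forall>t. u t \<in> vecs n) \<and>
     (\<forall>i<n. (\<lambda>t. u t i) absolutely_integrable_on {0..1})"

definition gamma :: "(real \<Rightarrow> nat \<Rightarrow> real) \<Rightarrow> real \<Rightarrow> gpt" where
  "gamma u t = ((\<lambda>i. integral {0..t} (\<lambda>s. u s i)),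
                (\<lambda>i j. (1/2) * integral {0..t}
                    (\<lambda>s. wedge (\<lambda>k. integral {0..s} (\<lambda>r. u r k)) (u s) i j)))"

definition sf_length :: "((nat \<Rightarrow> real) \<Rightarrow> real) \<Rightarrow> (real \<Rightarrow> nat \<Rightarrow> real) \<Rightarrow> real" where
  "sf_length N u = integral {0..1} (\<lambda>t. N (u t))"

definition d_cc0 :: "nat \<Rightarrow> ((nat \<Rightarrow> real) \<Rightarrow> real) \<Rightarrow> gpt \<Rightarrow> real" where
  "d_cc0 n N p = Inf {sf_length N u | u. control n u \<and> gamma u 1 = p}"

text \<open>Abn(G) = union of P x wedge^2(P) over (n-2)-dimensional subspaces P of R^n;
  P is given by a basis b_0..b_{n-3}, and wedge^2(P) is the span of the b_k wedge b_l.\<close>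
definition Abn :: "nat \<Rightarrow> gpt set" where
  "Abn n = {(x, Y). \<exists>b :: nat \<Rightarrow> nat \<Rightarrow> real.
      (\<forall>k<n-2. b k \<in> vecs n) \<and>
      (\<forall>c. (\<forall>i. (\<Sum>k<n-2. c k * b k i) = 0) \<longrightarrow> (\<forall>k<n-2. c k = 0)) \<and>
      (\<exists>c. x = (\<lambda>i. \<Sum>k<n-2. c k * b k i)) \<and>
      (\<exists>a. Y = (\<lambda>i j. \<Sum>k<n-2. \<Sum>l<n-2. a k l * wedge (b k) (b l) i j))}"

definition A_delta :: "nat \<Rightarrow> (nat \<Rightarrow> nat \<Rightarrow> real) \<Rightarrow> real \<Rightarrow> gpt set" where
  "A_delta n M \<delta> = {p \<in> S_eu n M. Inf (d_eu n M p ` Abn n) \<le> \<delta>}"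

end

theory Submission
  imports Defs
begin

(* Take n = 3, the Euclidean scalar product and the l1 norm. Every (n-2)-plane is a line, so
   Abn(G) = R^3 x {0} and a point whose e0 wedge e1 coordinate exceeds delta lies outside A_delta.

   With b = 6 delta, let g be the point of the unit sphere with horizontal part a e0 + b e1 and
   vertical part (a b / 3) e0 wedge e1, where a > 1/2; the control 2a(1-t) e0 + 2bt e1 reaches it
   with l1 length a + b. Moving g by z in the e1 wedge e2 direction and lowering a by at most z^2
   to stay on the sphere gives h with d_eu(g, h) <= 2z. Any control reaching h has l1 masses
   T_0 >= a', T_1 >= b and T_1 T_2 >= z, because the e1 wedge e2 coordinate of its endpoint is
   bounded by T_1 T_2; hence d_cc(0, h) >= a' + b + z/(2b). So d_cc grows by at least
   z/(12 delta) - z^2 while d_eu(g, h) <= 2z, which gives C = 1/48 for delta <= 1/100. *)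

lemma integral_eq_antiderivative:
  fixes F f :: "real \<Rightarrow> real"
  assumes "\<And>x. (F has_real_derivative f x) (at x)" "a \<le> b"
  shows "integral {a..b} f = F b - F a"
proof -
  have "(f has_integral (F b - F a)) {a..b}"
    using assms by (intro fundamental_theorem_of_calculus)
      (auto simp: has_real_derivative_iff_has_vector_derivative[symmetric]
            intro: has_field_derivative_at_within)
  then show ?thesis
    by (rule integral_unique)
qed

lemma sum_lessThan_3: "(\<Sum>i<(3::nat). f i) = f 0 + f 1 + (f 2 :: 'a :: comm_monoid_add)"
  by (simp add: eval_nat_numeral add.assoc)

definition id_matrix :: "nat \<Rightarrow> nat \<Rightarrow> real" where
  "id_matrix i j = (if i = j then 1 else 0)"

definition l1_norm :: "nat \<Rightarrow> (nat \<Rightarrow> real) \<Rightarrow> real" where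
  "l1_norm n x = (\<Sum>i<n. \<bar>x i\<bar>)"

lemma innerM_id_matrix: "innerM n id_matrix x y = (\<Sum>i<n. x i * y i)"
  by (simp add: innerM_def id_matrix_def if_distrib[of "\<lambda>c. c * _"] sum.delta cong: if_cong)

lemma innerBiv_id_matrix: "innerBiv n id_matrix A B = (\<Sum>i<n. \<Sum>j<n. A i j * B i j) / 2"
  by (simp add: innerBiv_def id_matrix_def if_distrib[of "\<lambda>c. c * _"] if_distrib[of "\<lambda>c. _ * c"]
      sum.delta sum.delta' sum_divide_distrib cong: if_cong)

lemma vecs_eq_zero_iff: "x \<in> vecs n \<Longrightarrow> x = (\<lambda>_. 0) \<longleftrightarrow> (\<forall>i<n. x i = 0)"
  by (auto simp: vecs_def fun_eq_iff) (meson not_le)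

lemma is_scalar_product_id_matrix: "is_scalar_product n id_matrix"
  unfolding is_scalar_product_def
proof (intro conjI allI ballI impI)
  fix x assume "x \<in> vecs n" "x \<noteq> (\<lambda>_. 0)"
  then obtain i where "i < n" "x i \<noteq> 0"
    using vecs_eq_zero_iff by blast
  then show "0 < innerM n id_matrix x x"
    unfolding innerM_id_matrix by (intro sum_pos2[of _ i]) (auto simp: zero_less_mult_iff)
qed (simp add: id_matrix_def)

lemma is_sf_norm_l1_norm: "is_sf_norm n (l1_norm n)"
  unfolding is_sf_norm_def l1_norm_def
proof (intro conjI allI ballI)
  fix x assume "x \<in> vecs n"
  then show "((\<Sum>i<n. \<bar>x i\<bar>) = 0) = (x = (\<lambda>_. 0))"
    by (simp add: vecs_eq_zero_iff sum_nonneg_eq_0_iff lessThan_def)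
  fix c
  show "(\<Sum>i<n. \<bar>c * x i\<bar>) = \<bar>c\<bar> * (\<Sum>i<n. \<bar>x i\<bar>)"
    by (simp add: abs_mult sum_distrib_left)
next
  fix x y :: "nat \<Rightarrow> real"
  show "(\<Sum>i<n. \<bar>x i + y i\<bar>) \<le> (\<Sum>i<n. \<bar>x i\<bar>) + (\<Sum>i<n. \<bar>y i\<bar>)"
    by (simp add: sum.distrib[symmetric] sum_mono abs_triangle_ineq)
qed (simp add: sum_nonneg)

lemma wedge_swap: "wedge v w j i = - wedge v w i j"
  by (simp add: wedge_def)

lemma control_vanishes: "control n u \<Longrightarrow> n \<le> i \<Longrightarrow> u t i = 0"
  by (simp add: control_def vecs_def)

lemma gamma_in_Gcarrier:
  assumes "control n u"
  shows "gamma u t \<in> Gcarrier n"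
proof -
  have "wedge (\<lambda>k. integral {0..s} (\<lambda>r. u r k)) (u s) i j = 0" if "n \<le> i \<or> n \<le> j" for s i j
    using that control_vanishes[OF assms] by (auto simp: wedge_def)
  then have "snd (gamma u t) i j = 0" if "n \<le> i \<or> n \<le> j" for i j
    using that by (simp add: gamma_def)
  moreover have "snd (gamma u t) j i = - snd (gamma u t) i j" for i j
    by (simp add: gamma_def wedge_swap[of _ _ j i])
  ultimately have "snd (gamma u t) \<in> bivecs n"
    unfolding bivecs_def by blast
  moreover have "fst (gamma u t) \<in> vecs n"
    using control_vanishes[OF assms] by (simp add: vecs_def gamma_def)
  ultimately show ?thesis
    by (simp add: Gcarrier_def mem_Times_iff)
qed

lemma integrable_control:
  assumes "control n u" "k < n" "{a..b} \<subseteq> {0..1}"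
  shows "(\<lambda>t. u t k) integrable_on {a..b}" "(\<lambda>t. \<bar>u t k\<bar>) integrable_on {a..b}"
proof -
  have "(\<lambda>t. u t k) absolutely_integrable_on {0..1}"
    using assms by (simp add: control_def)
  then have "(\<lambda>t. u t k) integrable_on {0..1}" "(\<lambda>t. \<bar>u t k\<bar>) integrable_on {0..1}"
    by (simp_all add: absolutely_integrable_on_def)
  then show "(\<lambda>t. u t k) integrable_on {a..b}" "(\<lambda>t. \<bar>u t k\<bar>) integrable_on {a..b}"
    using assms(3) by (auto intro: integrable_subinterval_real[of _ 0 1])
qed

lemma abs_integral_control_le:
  assumes "control n u" "k < n" "0 \<le> s" "s \<le> 1"
  shows "\<bar>integral {0..s} (\<lambda>t. u t k)\<bar> \<le> integral {0..1} (\<lambda>t. \<bar>u t k\<bar>)"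
proof -
  have "\<bar>integral {0..s} (\<lambda>t. u t k)\<bar> \<le> integral {0..s} (\<lambda>t. \<bar>u t k\<bar>)"
    using integrable_control[OF assms(1,2), of 0 s] assms(3,4)
    by (intro integral_norm_bound_integral[of "\<lambda>t. u t k", simplified]) auto
  also have "\<dots> \<le> integral {0..1} (\<lambda>t. \<bar>u t k\<bar>)"
    using integrable_control[OF assms(1,2)] assms(3,4) by (intro integral_subset_le) auto
  finally show ?thesis .
qed

lemma abs_snd_gamma_le:
  assumes u: "control n u" and "i < n" "j < n"
  shows "\<bar>snd (gamma u 1) i j\<bar>
           \<le> integral {0..1} (\<lambda>t. \<bar>u t i\<bar>) * integral {0..1} (\<lambda>t. \<bar>u t j\<bar>)"
    (is "_ \<le> ?T i * ?T j")
proof -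
  define f where "f s = wedge (\<lambda>k. integral {0..s} (\<lambda>r. u r k)) (u s) i j" for s
  have "\<bar>integral {0..1} f\<bar> \<le> 2 * (?T i * ?T j)"
  proof (cases "f integrable_on {0..1}")
    case True
    have "\<bar>f s\<bar> \<le> ?T i * \<bar>u s j\<bar> + ?T j * \<bar>u s i\<bar>" if "s \<in> {0..1}" for s
    proof -
      have "\<bar>f s\<bar> \<le> \<bar>integral {0..s} (\<lambda>r. u r i)\<bar> * \<bar>u s j\<bar>
                    + \<bar>u s i\<bar> * \<bar>integral {0..s} (\<lambda>r. u r j)\<bar>"
        unfolding f_def wedge_def by (metis abs_mult abs_triangle_ineq4)
      also have "\<dots> \<le> ?T i * \<bar>u s j\<bar> + \<bar>u s i\<bar> * ?T j"
        using abs_integral_control_le[OF u] assms that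
        by (intro add_mono mult_right_mono mult_left_mono) auto
      finally show ?thesis
        by (simp add: mult.commute)
    qed
    then have "\<bar>integral {0..1} f\<bar> \<le> integral {0..1} (\<lambda>s. ?T i * \<bar>u s j\<bar> + ?T j * \<bar>u s i\<bar>)"
      using True integrable_control[OF u] assms
      by (intro integral_norm_bound_integral[of f, simplified])
        (auto intro!: integrable_add integrable_on_mult_right)
    also have "\<dots> = 2 * (?T i * ?T j)"
      using integrable_control[OF u] assms by (simp add: integral_add integrable_on_mult_right)
    finally show ?thesis .
  next
    case False
    then show ?thesis
      by (simp add: not_integrable_integral integral_nonneg integrable_control[OF u] assms)
  qed
  then show ?thesis
    by (simp add: gamma_def f_def[abs_def] abs_mult)
qed

lemma sf_length_l1_norm:
  assumes "control n u"
  shows "sf_length (l1_norm n) u = (\<Sum>k<n. integral {0..1} (\<lambda>t. \<bar>u t k\<bar>))"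
  unfolding sf_length_def l1_norm_def
  using integrable_control[OF assms] by (intro integral_sum) auto

lemma sf_length_nonneg:
  assumes "is_sf_norm n N" "control n u"
  shows "0 \<le> sf_length N u"
proof (cases "(\<lambda>t. N (u t)) integrable_on {0..1}")
  case True
  then show ?thesis
    using assms unfolding sf_length_def by (intro integral_nonneg) (auto simp: is_sf_norm_def control_def)
qed (simp add: sf_length_def not_integrable_integral)

lemma d_cc0_le_sf_length:
  assumes "is_sf_norm n N" "control n u" "gamma u 1 = p"
  shows "d_cc0 n N p \<le> sf_length N u"
  unfolding d_cc0_def using assms sf_length_nonneg[OF assms(1)]
  by (intro cInf_lower bdd_belowI[where m = 0]) auto

lemma d_cc0_ge:
  assumes "control n v" "gamma v 1 = p"
    and "\<And>u. control n u \<Longrightarrow> gamma u 1 = p \<Longrightarrow> L \<le> sf_length N u"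
  shows "L \<le> d_cc0 n N p"
  unfolding d_cc0_def using assms by (intro cInf_greatest) auto

lemma add_divide_le_add_of_le_mult:
  fixes b s t z :: real
  assumes "0 < b" "b \<le> s" "0 \<le> t" "z \<le> s * t" "z \<le> 2 * b\<^sup>2"
  shows "b + z / (2 * b) \<le> s + t"
proof (cases "2 * b \<le> s")
  case True
  have "z / (2 * b) \<le> b"
    using assms by (simp add: divide_le_eq power2_eq_square)
  with True show ?thesis
    using assms by linarith
next
  case False
  then have "z \<le> 2 * b * t"
    using assms(3,4) mult_right_mono[of s "2 * b" t] by linarith
  then have "z / (2 * b) \<le> t"
    using assms(1) by (simp add: divide_le_eq mult.commute)
  with assms show ?thesis
    by linarith
qed

(* The e0 wedge e1 coordinate A b / 3 is the one produced by poly_control below, so these points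
   are its endpoints. *)
definition point3 :: "real \<Rightarrow> real \<Rightarrow> real \<Rightarrow> gpt" where
  "point3 A b z =
     ((\<lambda>i. if i = 0 then A else if i = 1 then b else 0),
      (\<lambda>i j. if (i, j) = (0, 1) then A * b / 3 else if (i, j) = (1, 0) then - (A * b / 3)
        else if (i, j) = (1, 2) then z else if (i, j) = (2, 1) then - z else 0))"

lemma point3_in_Gcarrier: "point3 A b z \<in> Gcarrier 3"
  by (auto simp: point3_def Gcarrier_def vecs_def bivecs_def)

lemma zeroG_eq_point3: "zeroG = point3 0 0 0"
  by (simp add: zeroG_def point3_def fun_eq_iff)

lemma Gcarrier_3_eqI:
  assumes p: "p \<in> Gcarrier 3" and q: "q \<in> Gcarrier 3"
    and "fst p 0 = fst q 0" "fst p 1 = fst q 1" "fst p 2 = fst q 2"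
    and "snd p 0 1 = snd q 0 1" "snd p 0 2 = snd q 0 2" "snd p 1 2 = snd q 1 2"
  shows "p = q"
proof (rule prod_eqI)
  show "fst p = fst q"
  proof
    fix i :: nat
    consider "i = 0" | "i = 1" | "i = 2" | "3 \<le> i"
      by linarith
    then show "fst p i = fst q i"
      using assms by cases (auto simp: Gcarrier_def vecs_def)
  qed
  have antisym: "snd r i j = - snd r j i" and vanish: "3 \<le> i \<or> 3 \<le> j \<Longrightarrow> snd r i j = 0"
    if "r \<in> Gcarrier 3" for r i j
    using that unfolding Gcarrier_def bivecs_def mem_Times_iff by blast+
  have diag: "snd r i i = 0" if "r \<in> Gcarrier 3" for r i
    using antisym[OF that, of i i] by simp
  show "snd p = snd q"
  proof (intro ext)
    fix i j :: nat
    have "i = j \<or> (i, j) \<in> {(0, 1), (0, 2), (1, 2)} \<or> (j, i) \<in> {(0, 1), (0, 2), (1, 2)}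
      \<or> 3 \<le> i \<or> 3 \<le> j"
      by auto
    then consider "i = j" | "(i, j) \<in> {(0, 1), (0, 2), (1, 2)}" | "(j, i) \<in> {(0, 1), (0, 2), (1, 2)}"
      | "3 \<le> i \<or> 3 \<le> j"
      by blast
    then show "snd p i j = snd q i j"
    proof cases
      case 3
      then show ?thesis
        using antisym[OF p, of i j] antisym[OF q, of i j] assms(6-8) by auto
    qed (use assms(6-8) diag[OF p] diag[OF q] vanish[OF p] vanish[OF q] in auto)
  qed
qed

lemma d_eu_point3:
  "d_eu 3 id_matrix (point3 A b z) (point3 A' b' z') =
     sqrt ((A - A')\<^sup>2 + (b - b')\<^sup>2 + (A * b / 3 - A' * b' / 3)\<^sup>2 + (z - z')\<^sup>2)"
  by (simp add: d_eu_def innerG_def innerM_id_matrix innerBiv_id_matrix sum_lessThan_3 point3_def)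
    (simp add: power2_eq_square field_simps)

lemma point3_in_S_eu_iff:
  "point3 A b z \<in> S_eu 3 id_matrix \<longleftrightarrow> A\<^sup>2 + b\<^sup>2 + (A * b / 3)\<^sup>2 + z\<^sup>2 = 1"
  by (simp add: S_eu_def zeroG_eq_point3 d_eu_point3 point3_in_Gcarrier)

lemma snd_Abn_3: "p \<in> Abn 3 \<Longrightarrow> snd p = (\<lambda>i j. 0)"
  by (auto simp: Abn_def wedge_def)

lemma zeroG_in_Abn_3: "zeroG \<in> Abn 3"
  unfolding Abn_def zeroG_def
  by (auto intro!: exI[of _ "\<lambda>k i. if i = 0 then 1 else 0"] exI[of _ "\<lambda>k. 0"]
      simp: vecs_def wedge_def dest: spec[of _ 0])

lemma point3_notin_A_delta:
  assumes "\<delta> < A * b / 3"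
  shows "point3 A b z \<notin> A_delta 3 id_matrix \<delta>"
proof -
  have "A * b / 3 \<le> d_eu 3 id_matrix (point3 A b z) p" if abn: "p \<in> Abn 3" for p
  proof -
    obtain x where p: "p = (x, \<lambda>i j. 0)"
      using snd_Abn_3[OF abn] by (metis prod.collapse)
    have "sqrt ((A * b / 3)\<^sup>2)
        \<le> sqrt ((A - x 0)\<^sup>2 + (b - x 1)\<^sup>2 + (x 2)\<^sup>2 + ((A * b / 3)\<^sup>2 + z\<^sup>2))"
      by (intro real_sqrt_le_mono) auto
    also have "\<dots> = d_eu 3 id_matrix (point3 A b z) p"
      by (simp add: p d_eu_def innerG_def innerM_id_matrix innerBiv_id_matrix sum_lessThan_3 point3_def
          power2_eq_square algebra_simps)
    finally show ?thesis
      by simp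
  qed
  then have "A * b / 3 \<le> Inf (d_eu 3 id_matrix (point3 A b z) ` Abn 3)"
    using zeroG_in_Abn_3 by (intro cInf_greatest) auto
  with assms show ?thesis
    by (auto simp: A_delta_def)
qed

(* The third component has mean zero and adds nothing to the e0 wedge e2 coordinate: it only
   moves the endpoint in the e1 wedge e2 direction. *)
definition poly_control :: "real \<Rightarrow> real \<Rightarrow> real \<Rightarrow> real \<Rightarrow> nat \<Rightarrow> real" where
  "poly_control A b c t =
     (\<lambda>i. if i = 0 then 2 * A * (1 - t) else if i = 1 then 2 * b * t
          else if i = 2 then c * (2 - 14 * t + 15 * t\<^sup>2) else 0)"

definition poly_control_primitive :: "real \<Rightarrow> real \<Rightarrow> real \<Rightarrow> real \<Rightarrow> nat \<Rightarrow> real" where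
  "poly_control_primitive A b c t =
     (\<lambda>i. if i = 0 then A * (2 * t - t\<^sup>2) else if i = 1 then b * t\<^sup>2
          else if i = 2 then c * (2 * t - 7 * t\<^sup>2 + 5 * t ^ 3) else 0)"

lemma control_poly_control: "control 3 (poly_control A b c)"
  unfolding control_def
proof (intro conjI allI impI)
  fix t
  show "poly_control A b c t \<in> vecs 3"
    by (simp add: poly_control_def vecs_def)
next
  fix i :: nat
  show "(\<lambda>t. poly_control A b c t i) absolutely_integrable_on {0..1}"
    by (rule absolutely_integrable_continuous_real)
      (cases "i = 0"; cases "i = 1"; cases "i = 2";
        auto simp: poly_control_def intro!: continuous_intros)
qed

lemma has_real_derivative_poly_control_primitive:
  "((\<lambda>t. poly_control_primitive A b c t i) has_real_derivative poly_control A b c t i) (at t)"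
  by (cases "i = 0"; cases "i = 1"; cases "i = 2")
    (auto simp: poly_control_primitive_def poly_control_def algebra_simps intro!: derivative_eq_intros)

lemma integral_poly_control:
  "0 \<le> t \<Longrightarrow> integral {0..t} (\<lambda>s. poly_control A b c s i) = poly_control_primitive A b c t i"
  using integral_eq_antiderivative[OF has_real_derivative_poly_control_primitive]
  by (simp add: poly_control_primitive_def)

lemma integral_wedge_poly_control:
  fixes A b c :: real
  defines "W i j \<equiv>
    integral {0..1} (\<lambda>s. wedge (poly_control_primitive A b c s) (poly_control A b c s) i j)"
  shows "W 0 1 = 2 * A * b / 3" "W 0 2 = 0" "W 1 2 = b * c / 3"
proof -
  have "W 0 1 = (\<lambda>s. 2 * A * b * s ^ 3 / 3) 1 - (\<lambda>s. 2 * A * b * s ^ 3 / 3) 0"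
    unfolding W_def by (rule integral_eq_antiderivative)
      (auto intro!: derivative_eq_intros simp: wedge_def poly_control_primitive_def poly_control_def
        algebra_simps power2_eq_square power3_eq_cube)
  then show "W 0 1 = 2 * A * b / 3"
    by simp
  have "W 0 2 = (\<lambda>s. A * c * (- 4 * s ^ 3 + 5 * s ^ 4 - s ^ 5)) 1
      - (\<lambda>s. A * c * (- 4 * s ^ 3 + 5 * s ^ 4 - s ^ 5)) 0"
    unfolding W_def by (rule integral_eq_antiderivative)
      (auto intro!: derivative_eq_intros simp: wedge_def poly_control_primitive_def poly_control_def
        algebra_simps power2_eq_square power3_eq_cube eval_nat_numeral)
  then show "W 0 2 = 0"
    by simp
  have "W 1 2 = (\<lambda>s. b * c * (- 2 * s ^ 3 / 3 + s ^ 5)) 1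
      - (\<lambda>s. b * c * (- 2 * s ^ 3 / 3 + s ^ 5)) 0"
    unfolding W_def by (rule integral_eq_antiderivative)
      (auto intro!: derivative_eq_intros simp: wedge_def poly_control_primitive_def poly_control_def
        algebra_simps power2_eq_square power3_eq_cube eval_nat_numeral)
  then show "W 1 2 = b * c / 3"
    by simp
qed

lemma gamma_poly_control: "gamma (poly_control A b c) 1 = point3 A b (b * c / 6)"
proof (rule Gcarrier_3_eqI[OF gamma_in_Gcarrier[OF control_poly_control] point3_in_Gcarrier])
  let ?w = "\<lambda>i j s. wedge (poly_control_primitive A b c s) (poly_control A b c s) i j"
  have snd_gamma: "snd (gamma (poly_control A b c) 1) i j = integral {0..1} (?w i j) / 2" for i j
    unfolding gamma_def snd_conv
    by (subst integral_cong[where g = "?w i j"]) (auto simp: integral_poly_control)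
  show "snd (gamma (poly_control A b c) 1) 0 1 = snd (point3 A b (b * c / 6)) 0 1"
    "snd (gamma (poly_control A b c) 1) 0 2 = snd (point3 A b (b * c / 6)) 0 2"
    "snd (gamma (poly_control A b c) 1) 1 2 = snd (point3 A b (b * c / 6)) 1 2"
    unfolding snd_gamma integral_wedge_poly_control by (simp_all add: point3_def)
qed (simp_all add: gamma_def integral_poly_control poly_control_primitive_def point3_def)

lemma d_cc0_point3_le:
  assumes "0 \<le> A" "0 \<le> b"
  shows "d_cc0 3 (l1_norm 3) (point3 A b 0) \<le> A + b"
proof -
  have "integral {0..1} (\<lambda>t. \<bar>poly_control A b 0 t k\<bar>) = poly_control_primitive A b 0 1 k" for k
  proof -
    have "integral {0..1} (\<lambda>t. \<bar>poly_control A b 0 t k\<bar>)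
        = integral {0..1} (\<lambda>t. poly_control A b 0 t k)"
      using assms by (intro integral_cong) (auto simp: poly_control_def)
    then show ?thesis
      by (simp add: integral_poly_control)
  qed
  then have "sf_length (l1_norm 3) (poly_control A b 0) = A + b"
    by (simp add: sf_length_l1_norm[OF control_poly_control] sum_lessThan_3 poly_control_primitive_def)
  moreover have "d_cc0 3 (l1_norm 3) (point3 A b 0) \<le> sf_length (l1_norm 3) (poly_control A b 0)"
    using gamma_poly_control[of A b 0]
    by (intro d_cc0_le_sf_length is_sf_norm_l1_norm control_poly_control) simp
  ultimately show ?thesis
    by simp
qed

lemma d_cc0_point3_ge:
  assumes "0 < b" "0 < z" "z \<le> 2 * b\<^sup>2"
  shows "A + b + z / (2 * b) \<le> d_cc0 3 (l1_norm 3) (point3 A b z)"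
proof (rule d_cc0_ge)
  show "control 3 (poly_control A b (6 * z / b))"
    and "gamma (poly_control A b (6 * z / b)) 1 = point3 A b z"
    using gamma_poly_control[of A b "6 * z / b"] assms(1) by (simp_all add: control_poly_control)
next
  fix u
  assume u: "control 3 u" "gamma u 1 = point3 A b z"
  define T where "T k = integral {0..1} (\<lambda>t. \<bar>u t k\<bar>)" for k
  have "fst (gamma u 1) k \<le> T k" if "k < 3" for k
    using abs_integral_control_le[OF u(1) that, of 1] unfolding T_def gamma_def fst_conv
    by linarith
  from this[of 0] this[of 1] have "A \<le> T 0" "b \<le> T 1"
    using u(2) by (simp_all add: point3_def)
  moreover have "z \<le> T 1 * T 2"
    using abs_snd_gamma_le[OF u(1), of 1 2] u(2) unfolding T_def by (simp add: point3_def)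
  moreover have "0 \<le> T 2"
    unfolding T_def using integrable_control[OF u(1), of 2 0 1] by (intro integral_nonneg) auto
  moreover have "sf_length (l1_norm 3) u = T 0 + T 1 + T 2"
    unfolding sf_length_l1_norm[OF u(1)] sum_lessThan_3 T_def ..
  ultimately show "A + b + z / (2 * b) \<le> sf_length (l1_norm 3) u"
    using add_divide_le_add_of_le_mult[of b "T 1" "T 2" z] assms by linarith
qed

definition sphere_coord :: "real \<Rightarrow> real \<Rightarrow> real" where
  "sphere_coord b z = sqrt ((1 - b\<^sup>2 - z\<^sup>2) / (1 + b\<^sup>2 / 9))"

lemma sphere_coord_sq:
  assumes "b\<^sup>2 + z\<^sup>2 \<le> 1"
  shows "(sphere_coord b z)\<^sup>2 * (1 + b\<^sup>2 / 9) = 1 - b\<^sup>2 - z\<^sup>2"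
proof -
  have "0 < 1 + b\<^sup>2 / 9"
    by (simp add: add_pos_nonneg)
  with assms show ?thesis
    by (simp add: sphere_coord_def)
qed

lemma point3_sphere_coord_in_S_eu:
  assumes "b\<^sup>2 + z\<^sup>2 \<le> 1"
  shows "point3 (sphere_coord b z) b z \<in> S_eu 3 id_matrix"
proof -
  have "(sphere_coord b z * b / 3)\<^sup>2 = (sphere_coord b z)\<^sup>2 * (b\<^sup>2 / 9)"
    by (simp add: power_mult_distrib power_divide)
  then show ?thesis
    unfolding point3_in_S_eu_iff using sphere_coord_sq[OF assms] by (simp add: distrib_left)
qed

lemma sphere_coord_gt_half:
  assumes "b\<^sup>2 + z\<^sup>2 \<le> 1 / 2"
  shows "1 / 2 < sphere_coord b z"
proof -
  have "b\<^sup>2 \<le> 1 / 2"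
    using assms zero_le_power2[of z] by linarith
  then have "(1 / 2)\<^sup>2 * (1 + b\<^sup>2 / 9) < 1 / 2"
    by (simp add: power2_eq_square)
  also have "1 / 2 \<le> (sphere_coord b z)\<^sup>2 * (1 + b\<^sup>2 / 9)"
    using sphere_coord_sq[of b z] assms by linarith
  finally have "(1 / 2)\<^sup>2 < (sphere_coord b z)\<^sup>2"
    by (rule mult_right_less_imp_less) (simp add: add_nonneg_nonneg)
  then show ?thesis
    by (rule power_less_imp_less_base)
      (use assms zero_le_power2[of b] zero_le_power2[of z] in
        \<open>auto simp: sphere_coord_def intro!: divide_nonneg_nonneg\<close>)
qed

lemma sphere_coord_decrement:
  assumes "b\<^sup>2 + z\<^sup>2 \<le> 1 / 2"
  shows "0 \<le> sphere_coord b 0 - sphere_coord b z" "sphere_coord b 0 - sphere_coord b z \<le> z\<^sup>2"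
proof -
  define a where "a = sphere_coord b 0"
  define a' where "a' = sphere_coord b z"
  define q where "q = 1 + b\<^sup>2 / 9"
  have "b\<^sup>2 \<le> 1 / 2"
    using assms zero_le_power2[of z] by linarith
  have "(a - a') * ((a + a') * q) = a\<^sup>2 * q - a'\<^sup>2 * q"
    by (simp add: algebra_simps power2_eq_square)
  also have "\<dots> = z\<^sup>2"
    using sphere_coord_sq[of b 0] sphere_coord_sq[of b z] assms \<open>b\<^sup>2 \<le> 1 / 2\<close>
    by (simp add: a_def a'_def q_def)
  finally have prod: "(a - a') * ((a + a') * q) = z\<^sup>2" .
  have "1 * 1 \<le> (a + a') * q"
    using sphere_coord_gt_half[of b 0] sphere_coord_gt_half[of b z] assms \<open>b\<^sup>2 \<le> 1 / 2\<close>
    by (intro mult_mono) (auto simp: a_def a'_def q_def)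
  then have pos: "1 \<le> (a + a') * q"
    by simp
  then show nonneg: "0 \<le> a - a'"
    using prod zero_le_mult_iff[of "a - a'" "(a + a') * q"] by auto
  have "(a - a') * 1 \<le> (a - a') * ((a + a') * q)"
    using pos nonneg by (rule mult_left_mono)
  with prod show "a - a' \<le> z\<^sup>2"
    by simp
qed

lemma d_eu_sphere_coord:
  assumes "b\<^sup>2 + z\<^sup>2 \<le> 1 / 2" "0 < z"
  shows "z \<le> d_eu 3 id_matrix (point3 (sphere_coord b 0) b 0) (point3 (sphere_coord b z) b z)"
    and "d_eu 3 id_matrix (point3 (sphere_coord b 0) b 0) (point3 (sphere_coord b z) b z) \<le> 2 * z"
proof -
  let ?D = "d_eu 3 id_matrix (point3 (sphere_coord b 0) b 0) (point3 (sphere_coord b z) b z)"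
  define a where "a = sphere_coord b 0"
  define a' where "a' = sphere_coord b z"
  define q where "q = 1 + b\<^sup>2 / 9"
  have D: "?D = sqrt ((a - a')\<^sup>2 * q + z\<^sup>2)"
    unfolding d_eu_point3 a_def[symmetric] a'_def[symmetric] q_def
    by (simp add: power2_eq_square field_simps)
  have "0 \<le> (a - a')\<^sup>2 * q"
    by (simp add: q_def add_nonneg_nonneg)
  then show "z \<le> ?D"
    unfolding D using assms(2) real_sqrt_le_mono[of "z\<^sup>2"] by simp
  have "z\<^sup>2 \<le> 1" "b\<^sup>2 \<le> 1 / 2"
    using assms(1) zero_le_power2[of b] zero_le_power2[of z] by linarith+
  have "(a - a')\<^sup>2 \<le> (z\<^sup>2)\<^sup>2"
    using sphere_coord_decrement[OF assms(1)] by (intro power_mono) (auto simp: a_def a'_def)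
  also have "\<dots> \<le> z\<^sup>2"
    unfolding power2_eq_square[of "z\<^sup>2"] using \<open>z\<^sup>2 \<le> 1\<close> by (intro mult_left_le) auto
  finally have "(a - a')\<^sup>2 * q \<le> z\<^sup>2 * 3"
    using \<open>b\<^sup>2 \<le> 1 / 2\<close> by (intro mult_mono) (auto simp: q_def)
  then have "(a - a')\<^sup>2 * q + z\<^sup>2 \<le> (2 * z)\<^sup>2"
    by (simp add: power_mult_distrib)
  then show "?D \<le> 2 * z"
    unfolding D using assms(2) by (intro real_le_lsqrt) (auto simp: q_def)
qed

lemma small_step_bounds:
  fixes \<delta> z :: real
  assumes "0 < \<delta>" "\<delta> \<le> 1 / 100" "0 \<le> z" "z \<le> 72 * \<delta>\<^sup>2"
  shows "(6 * \<delta>)\<^sup>2 + z\<^sup>2 \<le> 1 / 2" "z\<^sup>2 \<le> z / (24 * \<delta>)"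
proof -
  have "\<delta>\<^sup>2 \<le> (1 / 100)\<^sup>2"
    using assms by (intro power_mono) auto
  then have \<delta>2: "\<delta>\<^sup>2 \<le> 1 / 10000"
    by (simp add: power_divide)
  then have "z\<^sup>2 \<le> (1 / 100)\<^sup>2"
    using assms(3,4) by (intro power_mono) auto
  with \<delta>2 show "(6 * \<delta>)\<^sup>2 + z\<^sup>2 \<le> 1 / 2"
    by (simp add: power2_eq_square)
  have "\<delta> * \<delta>\<^sup>2 \<le> 1 / 100 * (1 / 10000)"
    using assms \<delta>2 by (intro mult_mono) auto
  then have "24 * \<delta> * z \<le> 1"
    using assms(1,4) mult_left_mono[OF assms(4), of "24 * \<delta>"] by linarith
  then show "z\<^sup>2 \<le> z / (24 * \<delta>)"
    using assms(1,3) mult_left_mono[of "24 * \<delta> * z" 1 z] by (simp add: field_simps power2_eq_square)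
qed

lemma d_cc0_point3_increase:
  assumes "0 \<le> a" "0 < b" "0 < z" "z \<le> 2 * b\<^sup>2"
  shows "d_cc0 3 (l1_norm 3) (point3 a b 0) + z / (2 * b) - (a - a') \<le> d_cc0 3 (l1_norm 3) (point3 a' b z)"
  using d_cc0_point3_le[of a b] d_cc0_point3_ge[of b z a'] assms by linarith

lemma sphere_point_in_S_eu_minus_A_delta:
  assumes "0 < \<delta>" "\<delta> \<le> 1 / 100"
  shows "point3 (sphere_coord (6 * \<delta>) 0) (6 * \<delta>) 0 \<in> S_eu 3 id_matrix - A_delta 3 id_matrix \<delta>"
proof -
  have small: "(6 * \<delta>)\<^sup>2 + 0\<^sup>2 \<le> 1 / 2"
    using small_step_bounds(1)[OF assms, of 0] by simp
  have "1 / 2 * (2 * \<delta>) < sphere_coord (6 * \<delta>) 0 * (2 * \<delta>)"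
    using sphere_coord_gt_half[OF small] assms(1) by (intro mult_strict_right_mono) auto
  then have "point3 (sphere_coord (6 * \<delta>) 0) (6 * \<delta>) 0 \<notin> A_delta 3 id_matrix \<delta>"
    by (intro point3_notin_A_delta) (simp add: algebra_simps)
  moreover have "point3 (sphere_coord (6 * \<delta>) 0) (6 * \<delta>) 0 \<in> S_eu 3 id_matrix"
    using small by (intro point3_sphere_coord_in_S_eu) simp
  ultimately show ?thesis
    by blast
qed

lemma d_cc0_steep_near_sphere_point:
  assumes "0 < \<delta>" "\<delta> \<le> 1 / 100" "0 < \<epsilon>"
  defines "g \<equiv> point3 (sphere_coord (6 * \<delta>) 0) (6 * \<delta>) 0"
  shows "\<exists>h\<in>S_eu 3 id_matrix. 0 < d_eu 3 id_matrix g h \<and> d_eu 3 id_matrix g h \<le> \<epsilon> \<and>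
           d_cc0 3 (l1_norm 3) g + 1 / 48 / \<delta> * d_eu 3 id_matrix g h \<le> d_cc0 3 (l1_norm 3) h"
proof -
  define b where "b = 6 * \<delta>"
  define z where "z = min (\<epsilon> / 2) (2 * b\<^sup>2)"
  define a where "a = sphere_coord b 0"
  define a' where "a' = sphere_coord b z"
  define h where "h = point3 a' b z"
  have z: "0 < z" "z \<le> \<epsilon> / 2" "z \<le> 2 * b\<^sup>2" "z \<le> 72 * \<delta>\<^sup>2"
    using assms by (auto simp: z_def b_def power_mult_distrib)
  have small: "b\<^sup>2 + z\<^sup>2 \<le> 1 / 2" and z2: "z\<^sup>2 \<le> z / (24 * \<delta>)"
    using small_step_bounds[OF assms(1,2) less_imp_le[OF z(1)] z(4)] by (simp_all add: b_def)
  then have "0 \<le> a"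
    using sphere_coord_gt_half[of b 0] zero_le_power2[of z] by (simp add: a_def)
  have D: "0 < d_eu 3 id_matrix g h" "d_eu 3 id_matrix g h \<le> 2 * z"
    using d_eu_sphere_coord[OF small z(1)] z(1) by (simp_all add: g_def h_def a'_def b_def)
  have "a - a' \<le> z / (24 * \<delta>)"
    using sphere_coord_decrement(2)[OF small] z2 by (simp add: a_def a'_def)
  moreover have "1 / 48 / \<delta> * d_eu 3 id_matrix g h \<le> z / (24 * \<delta>)"
    using mult_left_mono[OF D(2), of "1 / 48 / \<delta>"] assms(1) by simp
  moreover have "z / (2 * b) = 2 * (z / (24 * \<delta>))"
    by (simp add: b_def)
  ultimately have "d_cc0 3 (l1_norm 3) g + 1 / 48 / \<delta> * d_eu 3 id_matrix g h
      \<le> d_cc0 3 (l1_norm 3) g + z / (2 * b) - (a - a')"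
    by linarith
  also have "\<dots> \<le> d_cc0 3 (l1_norm 3) h"
    unfolding g_def h_def a_def[symmetric] b_def[symmetric] using \<open>0 \<le> a\<close> z assms(1)
    by (intro d_cc0_point3_increase) (auto simp: b_def)
  finally show ?thesis
    using D z small point3_sphere_coord_in_S_eu[of b z]
    by (intro bexI[of _ h]) (auto simp: h_def a'_def)
qed

theorem mainTheorem11:
  shows "\<exists>(n::nat) M N (C::real) (\<delta>0::real).
     2 \<le> n \<and> is_scalar_product n M \<and> is_sf_norm n N \<and> 0 < C \<and> 0 < \<delta>0 \<and>
     (\<forall>\<delta>. 0 < \<delta> \<and> \<delta> \<le> \<delta>0 \<longrightarrow>
        (\<exists>g \<in> S_eu n M - A_delta n M \<delta>.
           \<forall>\<epsilon>>0. \<exists>h \<in> S_eu n M.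
              0 < d_eu n M g h \<and> d_eu n M g h \<le> \<epsilon> \<and>
              d_cc0 n N h \<ge> d_cc0 n N g + C / \<delta> * d_eu n M g h))"
proof -
  have "\<exists>g \<in> S_eu 3 id_matrix - A_delta 3 id_matrix \<delta>.
      \<forall>\<epsilon>>0. \<exists>h \<in> S_eu 3 id_matrix. 0 < d_eu 3 id_matrix g h \<and> d_eu 3 id_matrix g h \<le> \<epsilon> \<and>
        d_cc0 3 (l1_norm 3) h \<ge> d_cc0 3 (l1_norm 3) g + 1 / 48 / \<delta> * d_eu 3 id_matrix g h"
    if "0 < \<delta>" "\<delta> \<le> 1 / 100" for \<delta>
    using sphere_point_in_S_eu_minus_A_delta[OF that] d_cc0_steep_near_sphere_point[OF that] by blast
  then show ?thesis
    using is_scalar_product_id_matrix is_sf_norm_l1_norm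
    by (intro exI[of _ 3] exI[of _ id_matrix] exI[of _ "l1_norm 3"] exI[of _ "1 / 48"] exI[of _ "1 / 100"])
      auto
qed

end
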